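(* The set-valued map $V_\uparrow=V+P$ is outer semicontinuous at every point of $I\times\mathbb{R}^n$.
   Context: Setting (MOC). Fix $T>0$, $I=[0,T]$, integers $n,m,p\ge1$, nonempty compact $U\subset\mathbb{R}^m$. $f:\mathbb{R}^n\times U\to\mathbb{R}^n$ continuous with $\|f(x_1,u)-f(x_2,u)\|\le K_f\|x_1-x_2\|$, $\|f(x,u)\|\le M_f$. $L:\mathbb{R}^n\times U\to\mathbb{R}^p$ continuous with $\|L(x,u)\|\le M_L$, $\|L(x_1,u)-L(x_2,u)\|\le K_L\|x_1-x_2\|$. Controls $\mathcal{U}$: bounded measurable $u:I\to U$. $x(s;t,x,u)$ solves $\dot x=f(x,u(s))$ on $[t,T]$, $x(t)=x$; $J(t,T,x,u)=\int_t^{T}L(x(s;t,x,u),u(s))ds$; $Y(t,x)=\{J(t,T,x,u):u\in\mathcal{U}\}$. $P\subset\mathbb{R}^p$: closed convex pointed cone containing $0$ with nonempty interior; $\mathcal{E}(S,P)=\{y\in S:(y-P)\cap S=\{y\}\}$; $V(t,x)=\mathcal{E}(\mathrm{cl}\,Y(t,x),P)$. $F$ is outer semicontinuous at $z$ if $\{y:\exists z_k\to z,\exists y_k\to y,y_k\in F(z_k)\}\subset F(z)$. *)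

theory Defs
  imports "HOL-Analysis.Analysis"
begin

definition controls :: "real \<Rightarrow> ('m::euclidean_space) set \<Rightarrow> (real \<Rightarrow> 'm) set" where
  "controls T U = {u. u \<in> borel_measurable (lebesgue_on {0..T})
                     \<and> (\<forall>s\<in>{0..T}. u s \<in> U) \<and> bounded (u ` {0..T})}"

text \<open>y is the (Caratheodory) solution of dx/ds = f(x,u(s)) on [t,T] with x(t) = x0,
  written in integral form.\<close>
definition is_traj ::
  "('n::euclidean_space \<Rightarrow> 'm \<Rightarrow> 'n) \<Rightarrow> real \<Rightarrow> real \<Rightarrow> 'n \<Rightarrow> (real \<Rightarrow> 'm) \<Rightarrow> (real \<Rightarrow> 'n) \<Rightarrow> bool" where
  "is_traj f T t x0 u y \<longleftrightarrow>
     (\<forall>s\<in>{t..T}. ((\<lambda>r. f (y r) (u r)) has_integral (y s - x0)) {t..s})"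

definition outcome_set ::
  "('n::euclidean_space \<Rightarrow> 'm::euclidean_space \<Rightarrow> 'n) \<Rightarrow> ('n \<Rightarrow> 'm \<Rightarrow> 'p::euclidean_space)
    \<Rightarrow> 'm set \<Rightarrow> real \<Rightarrow> real \<Rightarrow> 'n \<Rightarrow> 'p set" where
  "outcome_set f L U T t x0 =
     {J. \<exists>u\<in>controls T U. \<exists>y. is_traj f T t x0 u y \<and> J = integral {t..T} (\<lambda>s. L (y s) (u s))}"

definition efficient_set :: "('p::real_vector) set \<Rightarrow> 'p set \<Rightarrow> 'p set" where
  "efficient_set S P = {y \<in> S. ((\<lambda>q. y - q) ` P) \<inter> S = {y}}"

definition value_map where
  "value_map f L U P T t x0 = efficient_set (closure (outcome_set f L U T t x0)) P"

definition value_map_up where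
  "value_map_up f L U P T t x0 = {v + q | v q. v \<in> value_map f L U P T t x0 \<and> q \<in> P}"

definition outer_semicontinuous_at :: "('a::topological_space \<Rightarrow> 'b::topological_space set) \<Rightarrow> 'a set \<Rightarrow> 'a \<Rightarrow> bool" where
  "outer_semicontinuous_at F D z \<longleftrightarrow>
     {y. \<exists>zk yk. (\<forall>k. zk k \<in> D) \<and> zk \<longlonglongrightarrow> z \<and> yk \<longlonglongrightarrow> y \<and> (\<forall>k. yk k \<in> F (zk k))} \<subseteq> F z"

end

theory Submission
  imports Defs
begin

(* A closed convex pointed cone P admits a linear functional that is strictly
       positive on P - {0}.  Minimising it over the points of a compact set S lying below a
       given s yields an efficient point e with s - e in P; hence E(S,P) + P = S + P.
   (2) Set-valued maps.  If C is outer semicontinuous at z and uniformly bounded on the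
       domain, then C + P is outer semicontinuous at z for every closed P.  A map of the
       form w |-> cl Y(w) is outer semicontinuous at z as soon as every point of Y(w) lies
       within distance Lambda * dist z w of Y(z).
   (3) The control system.  Trajectories exist for every admissible control (Banach fixed
       point theorem for the Picard operator in a Bielecki-weighted sup norm), satisfy the
       flow property, and depend Lipschitz-continuously on the initial data (Gronwall's
       inequality).  Running a control from nearby initial data therefore changes its cost
       by at most a Lipschitz multiple of the distance, which is the excess estimate of (2);
       moreover all outcomes are bounded by M_L * T.
   The theorem then follows: cl Y is bounded and outer semicontinuous, hence so is
   cl Y + P, which by (1) coincides with V + P on the whole domain [0,T] x R^n. *)


section \<open>Pointed convex cones and efficient points\<close>

lemma cone_add:
  fixes P :: "'a::real_vector set"
  assumes "convex P" "cone P" "a \<in> P" "b \<in> P"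
  shows "a + b \<in> P"
  using assms convex_cone by blast

lemma convex_cone_sum:
  fixes P :: "'a::real_vector set"
  assumes "convex P" "cone P" "0 \<in> P" "finite A" "\<And>a. a \<in> A \<Longrightarrow> g a \<in> P"
  shows "sum g A \<in> P"
  using assms(4,5)
proof (induction A rule: finite_induct)
  case empty
  then show ?case using \<open>0 \<in> P\<close> by simp
next
  case (insert a A)
  then show ?case using cone_add[OF assms(1,2)] by simp
qed

text \<open>The unit vectors of a pointed convex cone have a convex hull avoiding the origin: a
  vanishing convex combination would exhibit a nonzero vector of P whose negative is in P.\<close>
lemma pointed_cone_hull_sphere:
  fixes P :: "'a::real_normed_vector set"
  assumes "convex P" and "cone P" and pointed: "P \<inter> uminus ` P = {0}"
  shows "0 \<notin> convex hull (P \<inter> sphere 0 1)"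
proof
  assume "0 \<in> convex hull (P \<inter> sphere 0 1)"
  then obtain S c where S: "finite S" "S \<subseteq> P \<inter> sphere 0 1" and c0: "\<forall>v\<in>S. 0 \<le> c v"
    and c1: "sum c S = 1" and comb: "(\<Sum>v\<in>S. c v *\<^sub>R v) = 0"
    unfolding convex_hull_explicit by blast
  have "0 \<in> P" using pointed by blast
  have "\<exists>v\<in>S. c v > 0"
  proof (rule ccontr)
    assume "\<not> (\<exists>v\<in>S. c v > 0)"
    then have "sum c S \<le> 0" by (intro sum_nonpos) (auto simp: not_less)
    with c1 show False by simp
  qed
  then obtain v0 where v0: "v0 \<in> S" "c v0 > 0" by blast
  have SP: "v \<in> P" if "v \<in> S" for v using that S(2) by auto
  have split: "c v0 *\<^sub>R v0 = - (\<Sum>v\<in>S - {v0}. c v *\<^sub>R v)"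
    using comb sum.remove[OF S(1) v0(1), of "\<lambda>v. c v *\<^sub>R v"] by (simp add: eq_neg_iff_add_eq_0)
  have rest: "(\<Sum>v\<in>S - {v0}. c v *\<^sub>R v) \<in> P"
    using S(1) SP c0 \<open>cone P\<close> by (intro convex_cone_sum[OF \<open>convex P\<close> \<open>cone P\<close> \<open>0 \<in> P\<close>])
      (auto simp: cone_def)
  have "c v0 *\<^sub>R v0 \<in> uminus ` P" unfolding split by (rule imageI[OF rest])
  moreover have "c v0 *\<^sub>R v0 \<in> P" using \<open>cone P\<close> SP[OF v0(1)] v0(2) by (simp add: cone_def)
  ultimately have "c v0 *\<^sub>R v0 \<in> P \<inter> uminus ` P" by blast
  then have "c v0 *\<^sub>R v0 = 0" using pointed by simp
  moreover have "norm v0 = 1" using v0(1) S(2) by auto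
  ultimately show False using v0(2) by simp
qed

text \<open>A closed pointed convex cone lies strictly on the positive side of some hyperplane
  through the origin, obtained by separating the origin from the hull above.\<close>
lemma pointed_cone_positive_functional:
  fixes P :: "'a::euclidean_space set"
  assumes "closed P" and "convex P" and "cone P" and "P \<inter> uminus ` P = {0}"
  obtains w where "\<And>p. p \<in> P \<Longrightarrow> p \<noteq> 0 \<Longrightarrow> w \<bullet> p > 0"
proof -
  define K where "K = P \<inter> sphere 0 1"
  have "compact (convex hull K)"
    unfolding K_def by (intro compact_convex_hull closed_Int_compact \<open>closed P\<close> compact_sphere)
  moreover have "0 \<notin> convex hull K"
    unfolding K_def by (rule pointed_cone_hull_sphere[OF assms(2-4)])
  ultimately obtain a b where "0 < b" and sep: "\<And>x. x \<in> convex hull K \<Longrightarrow> a \<bullet> x > b"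
    using separating_hyperplane_closed_0[OF convex_convex_hull compact_imp_closed] by blast
  have "a \<bullet> p > 0" if "p \<in> P" "p \<noteq> 0" for p
  proof -
    have "(1 / norm p) *\<^sub>R p \<in> K" unfolding K_def using that \<open>cone P\<close> by (auto simp: cone_def)
    then have "(1 / norm p) *\<^sub>R p \<in> convex hull K" using hull_subset[of K convex] by blast
    then have "a \<bullet> ((1 / norm p) *\<^sub>R p) > 0" using sep \<open>0 < b\<close> by (meson order.strict_trans)
    then show ?thesis using that by (simp add: zero_less_divide_iff)
  qed
  then show ?thesis using that by blast
qed

text \<open>Domination property: every point of a compact set lies above an efficient point.
  The efficient point minimises a strictly positive functional over the section of the set
  below the given point.\<close>
lemma efficient_point_below:
  fixes P :: "'a::euclidean_space set"
  assumes "closed P" "convex P" "cone P" and pointed: "P \<inter> uminus ` P = {0}"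
    and "compact S" "s \<in> S"
  shows "\<exists>e\<in>efficient_set S P. s - e \<in> P"
proof -
  obtain w where w: "\<And>p. p \<in> P \<Longrightarrow> p \<noteq> 0 \<Longrightarrow> w \<bullet> p > 0"
    using pointed_cone_positive_functional[OF assms(1-4)] by blast
  have "0 \<in> P" using pointed by blast
  define A where "A = S \<inter> (\<lambda>a. s - a) -` P"
  have "compact A"
    unfolding A_def by (intro compact_Int_closed \<open>compact S\<close> continuous_closed_vimage \<open>closed P\<close>)
      (intro continuous_intros)
  moreover have "s \<in> A" unfolding A_def using \<open>s \<in> S\<close> \<open>0 \<in> P\<close> by auto
  moreover have "continuous_on A (\<lambda>a. w \<bullet> a)" by (intro continuous_intros)
  ultimately obtain e where e: "e \<in> A" and emin: "\<And>a. a \<in> A \<Longrightarrow> w \<bullet> e \<le> w \<bullet> a"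
    using continuous_attains_inf[of A "\<lambda>a. w \<bullet> a"] by blast
  have minimal: "x = e" if "x \<in> S" "x = e - q" "q \<in> P" for x q
  proof -
    have "s - x = (s - e) + q" using that by simp
    moreover have "s - e \<in> P" using e unfolding A_def by simp
    ultimately have "s - x \<in> P" using cone_add[OF assms(2,3)] \<open>q \<in> P\<close> by metis
    then have "w \<bullet> e \<le> w \<bullet> (e - q)" using emin that unfolding A_def by auto
    then have "\<not> w \<bullet> q > 0" by (simp add: inner_diff_right)
    then show ?thesis using w[OF \<open>q \<in> P\<close>] that by auto
  qed
  have "e \<in> S" using e unfolding A_def by auto
  have "(\<lambda>q. e - q) ` P \<inter> S = {e}"
  proof
    show "(\<lambda>q. e - q) ` P \<inter> S \<subseteq> {e}" using minimal by blast
    show "{e} \<subseteq> (\<lambda>q. e - q) ` P \<inter> S" using \<open>0 \<in> P\<close> \<open>e \<in> S\<close> by force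
  qed
  then have "e \<in> efficient_set S P" unfolding efficient_set_def using \<open>e \<in> S\<close> by blast
  then show ?thesis using e unfolding A_def by auto
qed

lemma efficient_set_plus_cone:
  fixes P :: "'a::euclidean_space set"
  assumes "closed P" "convex P" "cone P" "P \<inter> uminus ` P = {0}" "compact S"
  shows "{v + q | v q. v \<in> efficient_set S P \<and> q \<in> P} = {s + q | s q. s \<in> S \<and> q \<in> P}"
proof
  show "{v + q | v q. v \<in> efficient_set S P \<and> q \<in> P} \<subseteq> {s + q | s q. s \<in> S \<and> q \<in> P}"
    unfolding efficient_set_def by blast
  show "{s + q | s q. s \<in> S \<and> q \<in> P} \<subseteq> {v + q | v q. v \<in> efficient_set S P \<and> q \<in> P}"
  proof clarify
    fix s q assume "s \<in> S" "q \<in> P"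
    then obtain e where e: "e \<in> efficient_set S P" "s - e \<in> P"
      using efficient_point_below[OF assms] by blast
    then have "(s - e) + q \<in> P" using \<open>q \<in> P\<close> cone_add[OF assms(2,3)] by blast
    moreover have "s + q = e + ((s - e) + q)" by simp
    ultimately show "\<exists>v p. s + q = v + p \<and> v \<in> efficient_set S P \<and> p \<in> P" using e(1) by blast
  qed
qed


section \<open>Outer semicontinuity of set-valued maps\<close>

lemma outer_semicontinuous_atI:
  assumes "\<And>y zk yk. \<forall>k. zk k \<in> D \<Longrightarrow> zk \<longlonglongrightarrow> z \<Longrightarrow> yk \<longlonglongrightarrow> y \<Longrightarrow> \<forall>k. yk k \<in> F (zk k)
            \<Longrightarrow> y \<in> F z"
  shows "outer_semicontinuous_at F D z"
  using assms unfolding outer_semicontinuous_at_def by blast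

lemma outer_semicontinuous_atD:
  assumes "outer_semicontinuous_at F D z"
    and "\<forall>k. zk k \<in> D" "zk \<longlonglongrightarrow> z" "yk \<longlonglongrightarrow> y" "\<forall>k. yk k \<in> F (zk k)"
  shows "y \<in> F z"
  using assms unfolding outer_semicontinuous_at_def by blast

lemma outer_semicontinuous_at_cong:
  assumes "\<And>w. w \<in> D \<Longrightarrow> F w = G w" and "z \<in> D"
  shows "outer_semicontinuous_at F D z \<longleftrightarrow> outer_semicontinuous_at G D z"
  using assms unfolding outer_semicontinuous_at_def by (smt (verit) Collect_cong)

lemma outer_semicontinuous_at_closure:
  fixes Y :: "'a::metric_space \<Rightarrow> 'b::metric_space set"
  assumes excess: "\<And>w y'. w \<in> D \<Longrightarrow> y' \<in> Y w \<Longrightarrow> \<exists>y\<in>Y z. dist y y' \<le> \<Lambda> * dist z w"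
  shows "outer_semicontinuous_at (\<lambda>w. closure (Y w)) D z"
proof (rule outer_semicontinuous_atI)
  fix y zk yk
  assume D: "\<forall>k. zk k \<in> D" and zk: "zk \<longlonglongrightarrow> z" and yk: "yk \<longlonglongrightarrow> y"
    and ykY: "\<forall>k. yk k \<in> closure (Y (zk k))"
  show "y \<in> closure (Y z)"
    unfolding closure_approachable
  proof (intro allI impI)
    fix e :: real assume "e > 0"
    have "(\<lambda>k. \<Lambda> * dist z (zk k)) \<longlonglongrightarrow> \<Lambda> * dist z z"
      by (intro tendsto_intros zk)
    then have "eventually (\<lambda>k. \<Lambda> * dist z (zk k) < e/3) sequentially"
      using \<open>e > 0\<close> by (intro order_tendstoD(2)) auto
    moreover have "eventually (\<lambda>k. dist (yk k) y < e/3) sequentially"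
      using tendstoD[OF yk, of "e/3"] \<open>e > 0\<close> by simp
    ultimately obtain k where k: "\<Lambda> * dist z (zk k) < e/3" "dist (yk k) y < e/3"
      using eventually_happens'[OF sequentially_bot] eventually_conj by blast
    obtain y' where y': "y' \<in> Y (zk k)" "dist y' (yk k) < e/3"
      using ykY \<open>e > 0\<close> unfolding closure_approachable by (meson divide_pos_pos zero_less_numeral)
    obtain x where x: "x \<in> Y z" "dist x y' \<le> \<Lambda> * dist z (zk k)"
      using excess[OF _ y'(1)] D by blast
    have "dist x y \<le> dist x y' + dist y' (yk k) + dist (yk k) y"
      by (metis dist_triangle add_le_cancel_right order_trans)
    also have "\<dots> < e" using k x(2) y'(2) by linarith
    finally show "\<exists>x\<in>Y z. dist x y < e" using x(1) by blast
  qed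
qed

text \<open>Adding a closed set to a uniformly bounded outer semicontinuous map preserves outer
  semicontinuity (bounded sequences of the first summand have convergent subsequences).\<close>
lemma outer_semicontinuous_at_plus_closed:
  fixes C :: "'a::topological_space \<Rightarrow> 'b::euclidean_space set"
  assumes osc: "outer_semicontinuous_at C D z"
    and bounded: "bounded (\<Union>w\<in>D. C w)" and "closed P"
  shows "outer_semicontinuous_at (\<lambda>w. {c + q | c q. c \<in> C w \<and> q \<in> P}) D z"
proof (rule outer_semicontinuous_atI)
  fix y zk yk
  assume D: "\<forall>k. zk k \<in> D" and zk: "zk \<longlonglongrightarrow> z" and yk: "yk \<longlonglongrightarrow> y"
    and ykF: "\<forall>k. yk k \<in> {c + q | c q. c \<in> C (zk k) \<and> q \<in> P}"
  have "\<forall>k. \<exists>c. c \<in> C (zk k) \<and> yk k - c \<in> P" using ykF by force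
  then obtain ck where ckC: "\<And>k. ck k \<in> C (zk k)" and ckP: "\<And>k. yk k - ck k \<in> P"
    using choice[of "\<lambda>k c. c \<in> C (zk k) \<and> yk k - c \<in> P"] by blast
  have "range ck \<subseteq> (\<Union>w\<in>D. C w)" using ckC D by blast
  then have "bounded (range ck)" by (rule bounded_subset[OF bounded])
  then obtain c r where r: "strict_mono r" and cr: "(ck \<circ> r) \<longlonglongrightarrow> c"
    using bounded_imp_convergent_subsequence by blast
  have "c \<in> C z"
    by (rule outer_semicontinuous_atD[OF osc _ LIMSEQ_subseq_LIMSEQ[OF zk r] cr]) (use D ckC in auto)
  moreover have "y - c \<in> P"
  proof (rule closed_sequentially[OF \<open>closed P\<close>])
    show "yk (r n) - ck (r n) \<in> P" for n using ckP by simp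
    show "(\<lambda>n. yk (r n) - ck (r n)) \<longlonglongrightarrow> y - c"
      using tendsto_diff[OF LIMSEQ_subseq_LIMSEQ[OF yk r] cr] by (simp add: o_def)
  qed
  ultimately show "y \<in> {c + q | c q. c \<in> C z \<and> q \<in> P}" by force
qed


section \<open>Gronwall's inequality\<close>

lemma exp_weight_has_integral:
  fixes K :: real
  assumes "a \<le> s"
  shows "((\<lambda>r. K * exp (2 * K * (r - a))) has_integral ((exp (2 * K * (s - a)) - 1) / 2)) {a..s}"
proof -
  have "((\<lambda>r. K * exp (2 * K * (r - a))) has_integral
          (exp (2 * K * (s - a)) / 2 - exp (2 * K * (a - a)) / 2)) {a..s}"
  proof (rule fundamental_theorem_of_calculus[OF assms])
    fix x assume "x \<in> {a..s}"
    have "((\<lambda>r. exp (2 * K * (r - a)) / 2) has_real_derivative K * exp (2 * K * (x - a)))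
            (at x within {a..s})"
      by (auto intro!: derivative_eq_intros)
    then show "((\<lambda>r. exp (2 * K * (r - a)) / 2) has_vector_derivative K * exp (2 * K * (x - a)))
                 (at x within {a..s})"
      by (simp add: has_real_derivative_iff_has_vector_derivative)
  qed
  then show ?thesis by (simp add: diff_divide_distrib)
qed

text \<open>The weighted quantity
  exp(-2K(s-a)) * norm (d s) attains its maximum m at some s0; inserting s0 into the integral
  inequality gives E * m \<le> \<delta> + m * (E - 1) / 2 with E = exp(2K(s0-a)) \<ge> 1, whence m \<le> \<delta>.\<close>
lemma gronwall_exp_bound:
  fixes d :: "real \<Rightarrow> 'a::real_normed_vector"
  assumes "a \<le> b" and "K \<ge> 0" and dc: "continuous_on {a..b} d"
    and H: "\<And>s. s \<in> {a..b} \<Longrightarrow> norm (d s) \<le> \<delta> + integral {a..s} (\<lambda>r. K * norm (d r))"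
    and s: "s \<in> {a..b}"
  shows "norm (d s) \<le> \<delta> * exp (2 * K * (s - a))"
proof -
  define \<phi> where "\<phi> s = exp (- (2 * K * (s - a))) * norm (d s)" for s
  have "continuous_on {a..b} \<phi>" unfolding \<phi>_def by (intro continuous_intros dc)
  moreover have "{a..b} \<noteq> {}" using \<open>a \<le> b\<close> by simp
  ultimately obtain s0 where s0: "s0 \<in> {a..b}" and max: "\<And>s. s \<in> {a..b} \<Longrightarrow> \<phi> s \<le> \<phi> s0"
    using continuous_attains_sup[OF compact_Icc] by blast
  define m where "m = \<phi> s0"
  have "m \<ge> 0" unfolding m_def \<phi>_def by simp
  have nd: "norm (d r) \<le> exp (2 * K * (r - a)) * m" if "r \<in> {a..b}" for r
  proof -
    have "norm (d r) = exp (2 * K * (r - a)) * \<phi> r"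
      unfolding \<phi>_def by (simp add: mult.assoc[symmetric] exp_add[symmetric])
    also have "\<dots> \<le> exp (2 * K * (r - a)) * m" using max[OF that] unfolding m_def by simp
    finally show ?thesis .
  qed
  define E where "E = exp (2 * K * (s0 - a))"
  have "E \<ge> 1" unfolding E_def using s0 \<open>K \<ge> 0\<close> by simp
  have "integral {a..s0} (\<lambda>r. K * norm (d r)) \<le> integral {a..s0} (\<lambda>r. K * exp (2 * K * (r - a)) * m)"
  proof (rule integral_le)
    show "(\<lambda>r. K * norm (d r)) integrable_on {a..s0}"
      by (intro integrable_continuous_interval continuous_intros continuous_on_subset[OF dc])
        (use s0 in auto)
    show "(\<lambda>r. K * exp (2 * K * (r - a)) * m) integrable_on {a..s0}"
      by (intro integrable_continuous_interval continuous_intros)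
    show "K * norm (d r) \<le> K * exp (2 * K * (r - a)) * m" if "r \<in> {a..s0}" for r
      using nd[of r] that s0 \<open>K \<ge> 0\<close> by (auto simp: mult.assoc intro: mult_left_mono)
  qed
  also have "\<dots> = m * ((E - 1) / 2)"
    using has_integral_mult_left[OF exp_weight_has_integral[of a s0 K], of m] s0 unfolding E_def
    by (auto dest!: integral_unique simp: mult_ac)
  finally have "norm (d s0) \<le> \<delta> + m * ((E - 1) / 2)" using H[OF s0] by linarith
  moreover have "norm (d s0) = E * m" unfolding m_def \<phi>_def E_def by (simp add: exp_minus)
  ultimately have "m * ((E + 1) / 2) \<le> \<delta>" by (simp add: field_simps)
  moreover have "m \<le> m * ((E + 1) / 2)" using mult_left_mono[of 1 "(E + 1) / 2" m] \<open>E \<ge> 1\<close> \<open>m \<ge> 0\<close>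
    by simp
  ultimately have "m \<le> \<delta>" by linarith
  then show ?thesis using nd[OF s] by (simp add: mult.commute order_trans)
qed


section \<open>The control system\<close>

lemma lipschitz_const_nonneg:
  fixes g :: "'a::euclidean_space \<Rightarrow> 'b::real_normed_vector"
  assumes "\<And>x1 x2. norm (g x1 - g x2) \<le> K * norm (x1 - x2)"
  shows "0 \<le> K"
proof -
  obtain b :: 'a where "b \<in> Basis" using nonempty_Basis by blast
  have "0 \<le> norm (g b - g 0)" by simp
  also have "\<dots> \<le> K * norm (b - 0)" by (rule assms)
  finally show ?thesis using \<open>b \<in> Basis\<close> by simp
qed

locale control_system =
  fixes T :: real and U :: "'m::euclidean_space set"
    and f :: "'n::euclidean_space \<Rightarrow> 'm \<Rightarrow> 'n" and L :: "'n \<Rightarrow> 'm \<Rightarrow> 'p::euclidean_space"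
    and K_f M_f K_L M_L :: real
  assumes U_nonempty: "U \<noteq> {}"
    and f_cont: "continuous_on (UNIV \<times> U) (\<lambda>(x, u). f x u)"
    and f_lipschitz: "\<And>x1 x2 u. u \<in> U \<Longrightarrow> norm (f x1 u - f x2 u) \<le> K_f * norm (x1 - x2)"
    and f_bound: "\<And>x u. u \<in> U \<Longrightarrow> norm (f x u) \<le> M_f"
    and L_cont: "continuous_on (UNIV \<times> U) (\<lambda>(x, u). L x u)"
    and L_bound: "\<And>x u. u \<in> U \<Longrightarrow> norm (L x u) \<le> M_L"
    and L_lipschitz: "\<And>x1 x2 u. u \<in> U \<Longrightarrow> norm (L x1 u - L x2 u) \<le> K_L * norm (x1 - x2)"
begin

lemma control_in_U: "u \<in> controls T U \<Longrightarrow> r \<in> {0..T} \<Longrightarrow> u r \<in> U"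
  by (simp add: controls_def)

lemma constants_nonneg: "0 \<le> K_f" "0 \<le> M_f" "0 \<le> K_L" "0 \<le> M_L"
proof -
  obtain u where u: "u \<in> U" using U_nonempty by blast
  show "0 \<le> K_f" using lipschitz_const_nonneg[of "\<lambda>x. f x u"] f_lipschitz[OF u] by blast
  show "0 \<le> K_L" using lipschitz_const_nonneg[of "\<lambda>x. L x u"] L_lipschitz[OF u] by blast
  show "0 \<le> M_f" using f_bound[OF u, of 0] norm_ge_zero order_trans by blast
  show "0 \<le> M_L" using L_bound[OF u, of 0] norm_ge_zero order_trans by blast
qed

lemma control_comp_measurable:
  fixes F :: "'n \<Rightarrow> 'm \<Rightarrow> 'q::euclidean_space"
  assumes F: "continuous_on (UNIV \<times> U) (\<lambda>(x, v). F x v)" and u: "u \<in> controls T U"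
    and ab: "{a..b} \<subseteq> {0..T}" and y: "continuous_on {a..b} y"
  shows "(\<lambda>r. F (y r) (u r)) \<in> borel_measurable (lebesgue_on {a..b})"
proof -
  have "u \<in> borel_measurable (lebesgue_on {a..b})"
    using u ab measurable_restrict_mono unfolding controls_def by blast
  moreover have "y \<in> borel_measurable (lebesgue_on {a..b})"
    by (rule continuous_imp_measurable_on_sets_lebesgue[OF y]) auto
  ultimately have pair: "(\<lambda>r. (y r, u r)) \<in> borel_measurable (lebesgue_on {a..b})"
    using borel_measurable_Pair by blast
  have "(\<lambda>r. (y r, u r)) \<in> measurable (lebesgue_on {a..b}) (restrict_space borel (UNIV \<times> U))"
    by (rule measurable_restrict_space2[OF _ pair]) (use ab control_in_U[OF u] in auto)
  moreover have "(\<lambda>(x, v). F x v) \<in> borel_measurable (restrict_space borel (UNIV \<times> U))"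
    by (rule borel_measurable_continuous_on_restrict[OF F])
  ultimately have "(\<lambda>(x, v). F x v) \<circ> (\<lambda>r. (y r, u r)) \<in> borel_measurable (lebesgue_on {a..b})"
    by (rule measurable_comp)
  then show ?thesis by (simp add: o_def)
qed

lemma control_comp_integrable:
  fixes F :: "'n \<Rightarrow> 'm \<Rightarrow> 'q::euclidean_space"
  assumes F: "continuous_on (UNIV \<times> U) (\<lambda>(x, v). F x v)"
    and F_bound: "\<And>x v. v \<in> U \<Longrightarrow> norm (F x v) \<le> M"
    and u: "u \<in> controls T U" and ab: "{a..b} \<subseteq> {0..T}" and y: "continuous_on {a..b} y"
  shows "(\<lambda>r. F (y r) (u r)) integrable_on {a..b}"
proof -
  have "(\<lambda>r. F (y r) (u r)) absolutely_integrable_on {a..b}"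
  proof (rule measurable_bounded_by_integrable_imp_absolutely_integrable[where g="\<lambda>_. M"])
    show "(\<lambda>r. F (y r) (u r)) \<in> borel_measurable (lebesgue_on {a..b})"
      by (rule control_comp_measurable[OF F u ab y])
    show "norm (F (y r) (u r)) \<le> M" if "r \<in> {a..b}" for r
      using that ab control_in_U[OF u] F_bound by auto
  qed auto
  then show ?thesis by (simp add: absolutely_integrable_on_def)
qed

lemma traj_integrable:
  assumes "is_traj f T t x0 u y" and "t \<in> {0..T}"
  shows "(\<lambda>r. f (y r) (u r)) integrable_on {t..T}"
  using assms unfolding is_traj_def by (meson atLeastAtMost_iff has_integral_integrable order_refl)

lemma traj_eq:
  assumes "is_traj f T t x0 u y" and "s \<in> {t..T}"
  shows "y s = x0 + integral {t..s} (\<lambda>r. f (y r) (u r))"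
  using assms unfolding is_traj_def by (metis add.commute diff_add_cancel integral_unique)

lemma traj_continuous:
  assumes tr: "is_traj f T t x0 u y" and t: "t \<in> {0..T}"
  shows "continuous_on {t..T} y"
proof -
  have "continuous_on {t..T} (\<lambda>s. x0 + integral {t..s} (\<lambda>r. f (y r) (u r)))"
    by (intro continuous_intros indefinite_integral_continuous_1 traj_integrable[OF tr t])
  then show ?thesis by (rule continuous_on_eq) (use traj_eq[OF tr] in auto)
qed

lemma traj_displacement:
  assumes tr: "is_traj f T t x0 u y" and u: "u \<in> controls T U" and t: "t \<in> {0..T}"
    and s: "s \<in> {t..T}"
  shows "norm (y s - x0) \<le> M_f * (s - t)"
proof -
  have int: "((\<lambda>r. f (y r) (u r)) has_integral (y s - x0)) (cbox t s)"
    using tr s unfolding is_traj_def by auto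
  have "\<And>r. r \<in> cbox t s \<Longrightarrow> norm (f (y r) (u r)) \<le> M_f"
    using control_in_U[OF u] t s f_bound by auto
  from has_integral_bound[OF constants_nonneg(2) int this] show ?thesis using s by simp
qed

lemma traj_restart:
  assumes tr: "is_traj f T t1 x1 u y" and t1: "t1 \<in> {0..T}" and t2: "t2 \<in> {t1..T}"
  shows "is_traj f T t2 (y t2) u y"
  unfolding is_traj_def
proof
  fix s assume s: "s \<in> {t2..T}"
  let ?g = "\<lambda>r. f (y r) (u r)"
  have int: "?g integrable_on {t1..s}"
    by (rule integrable_subinterval_real[OF traj_integrable[OF tr t1]]) (use s in auto)
  have "integral {t1..t2} ?g + integral {t2..s} ?g = integral {t1..s} ?g"
    by (rule Henstock_Kurzweil_Integration.integral_combine[OF _ _ int]) (use t2 s in auto)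
  moreover have "y s = x1 + integral {t1..s} ?g" "y t2 = x1 + integral {t1..t2} ?g"
    using traj_eq[OF tr] s t2 by auto
  ultimately have "integral {t2..s} ?g = y s - y t2" by (simp add: algebra_simps)
  moreover have "?g integrable_on {t2..s}"
    by (rule integrable_subinterval_real[OF int]) (use t2 in auto)
  ultimately show "(?g has_integral (y s - y t2)) {t2..s}" by (metis integrable_integral)
qed

lemma traj_stability:
  assumes u: "u \<in> controls T U" and t: "t \<in> {0..T}"
    and tr1: "is_traj f T t x1 u y1" and tr2: "is_traj f T t x2 u y2" and s: "s \<in> {t..T}"
  shows "norm (y1 s - y2 s) \<le> norm (x1 - x2) * exp (2 * K_f * (s - t))"
proof -
  define d where "d r = y1 r - y2 r" for r
  have dc: "continuous_on {t..T} d"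
    unfolding d_def by (intro continuous_intros traj_continuous[OF tr1 t] traj_continuous[OF tr2 t])
  have "norm (d r) \<le> norm (x1 - x2) + integral {t..r} (\<lambda>q. K_f * norm (d q))" if r: "r \<in> {t..T}" for r
  proof -
    let ?g1 = "\<lambda>q. f (y1 q) (u q)" and ?g2 = "\<lambda>q. f (y2 q) (u q)"
    have i1: "?g1 integrable_on {t..r}" and i2: "?g2 integrable_on {t..r}"
      using r by (auto intro: integrable_subinterval_real traj_integrable[OF tr1 t]
          traj_integrable[OF tr2 t])
    have eq: "d r = (x1 - x2) + integral {t..r} (\<lambda>q. ?g1 q - ?g2 q)"
      unfolding d_def traj_eq[OF tr1 r] traj_eq[OF tr2 r] integral_diff[OF i1 i2] by simp
    have bound: "norm (integral {t..r} (\<lambda>q. ?g1 q - ?g2 q)) \<le> integral {t..r} (\<lambda>q. K_f * norm (d q))"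
    proof (rule integral_norm_bound_integral)
      show "(\<lambda>q. ?g1 q - ?g2 q) integrable_on {t..r}" using i1 i2 by (rule integrable_diff)
      show "(\<lambda>q. K_f * norm (d q)) integrable_on {t..r}"
        by (intro integrable_continuous_interval continuous_intros continuous_on_subset[OF dc])
          (use r in auto)
      show "norm (?g1 q - ?g2 q) \<le> K_f * norm (d q)" if "q \<in> {t..r}" for q
        unfolding d_def by (rule f_lipschitz[OF control_in_U[OF u]]) (use that r t in auto)
    qed
    show ?thesis
      unfolding eq using bound norm_triangle_ineq[of "x1 - x2" "integral {t..r} (\<lambda>q. ?g1 q - ?g2 q)"]
      by linarith
  qed
  then show ?thesis
    using gronwall_exp_bound[OF _ constants_nonneg(1) dc _ s] s unfolding d_def by auto
qed

text \<open>Deviation of two trajectories driven by the same control from different initial data: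
  the later one starts within M_f * (t2 - t1) + norm (x1 - x2) of the earlier one.\<close>
lemma traj_deviation:
  assumes u: "u \<in> controls T U" and t1: "t1 \<in> {0..T}" and t2: "t2 \<in> {t1..T}"
    and tr1: "is_traj f T t1 x1 u y1" and tr2: "is_traj f T t2 x2 u y2" and s: "s \<in> {t2..T}"
  shows "norm (y1 s - y2 s) \<le> (M_f * (t2 - t1) + norm (x1 - x2)) * exp (2 * K_f * T)"
proof -
  have t2': "t2 \<in> {0..T}" using t1 t2 by auto
  have "norm (y1 t2 - x2) \<le> M_f * (t2 - t1) + norm (x1 - x2)"
    using traj_displacement[OF tr1 u t1 t2] norm_triangle_ineq[of "y1 t2 - x1" "x1 - x2"] by simp
  moreover have "exp (2 * K_f * (s - t2)) \<le> exp (2 * K_f * T)"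
    using constants_nonneg(1) s t2' by (simp add: mult_left_mono)
  ultimately have "norm (y1 t2 - x2) * exp (2 * K_f * (s - t2))
                     \<le> (M_f * (t2 - t1) + norm (x1 - x2)) * exp (2 * K_f * T)"
    by (simp add: mult_mono')
  then show ?thesis
    using traj_stability[OF u t2' traj_restart[OF tr1 t1 t2] tr2 s] by linarith
qed

text \<open>Dependence of the cost on the initial data for a fixed control: the costs differ by the
  cost of the extra time interval plus the integrated Lipschitz effect of the deviation.\<close>
lemma cost_compare:
  assumes u: "u \<in> controls T U" and t1: "t1 \<in> {0..T}" and t2: "t2 \<in> {t1..T}"
    and tr1: "is_traj f T t1 x1 u y1" and tr2: "is_traj f T t2 x2 u y2"
  shows "norm (integral {t1..T} (\<lambda>s. L (y1 s) (u s)) - integral {t2..T} (\<lambda>s. L (y2 s) (u s)))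
           \<le> M_L * (t2 - t1) + K_L * T * exp (2 * K_f * T) * (M_f * (t2 - t1) + norm (x1 - x2))"
proof -
  have t2': "t2 \<in> {0..T}" using t1 t2 by auto
  define \<delta> where "\<delta> = M_f * (t2 - t1) + norm (x1 - x2)"
  have "\<delta> \<ge> 0" unfolding \<delta>_def using constants_nonneg t2 by auto
  define l1 where "l1 r = L (y1 r) (u r)" for r
  define l2 where "l2 r = L (y2 r) (u r)" for r
  have li1: "l1 integrable_on {t1..T}" unfolding l1_def
    by (rule control_comp_integrable[OF L_cont L_bound u _ traj_continuous[OF tr1 t1]]) (use t1 in auto)
  have li1a: "l1 integrable_on {t1..t2}" and li1b: "l1 integrable_on {t2..T}"
    using t2 by (auto intro: integrable_subinterval_real[OF li1])
  have li2: "l2 integrable_on {t2..T}" unfolding l2_def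
    by (rule control_comp_integrable[OF L_cont L_bound u _ traj_continuous[OF tr2 t2']]) (use t2' in auto)
  have split: "integral {t1..T} l1 - integral {t2..T} l2
                 = integral {t1..t2} l1 + integral {t2..T} (\<lambda>r. l1 r - l2 r)"
    using Henstock_Kurzweil_Integration.integral_combine[of t1 t2 T l1] li1 t2 integral_diff[OF li1b li2] by auto
  have "norm (integral {t1..t2} l1) \<le> integral {t1..t2} (\<lambda>_. M_L)"
    by (rule integral_norm_bound_integral[OF li1a])
      (use t1 t2 control_in_U[OF u] L_bound in \<open>auto simp: l1_def\<close>)
  then have head: "norm (integral {t1..t2} l1) \<le> M_L * (t2 - t1)"
    using t2 by (simp add: mult.commute)
  have "norm (integral {t2..T} (\<lambda>r. l1 r - l2 r)) \<le> integral {t2..T} (\<lambda>_. K_L * (\<delta> * exp (2 * K_f * T)))"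
  proof (rule integral_norm_bound_integral)
    show "(\<lambda>r. l1 r - l2 r) integrable_on {t2..T}" using li1b li2 by (rule integrable_diff)
    show "norm (l1 r - l2 r) \<le> K_L * (\<delta> * exp (2 * K_f * T))" if r: "r \<in> {t2..T}" for r
    proof -
      have "norm (l1 r - l2 r) \<le> K_L * norm (y1 r - y2 r)"
        unfolding l1_def l2_def by (rule L_lipschitz[OF control_in_U[OF u]]) (use r t2' in auto)
      also have "\<dots> \<le> K_L * (\<delta> * exp (2 * K_f * T))"
        using traj_deviation[OF u t1 t2 tr1 tr2 r] constants_nonneg(3)
        unfolding \<delta>_def by (simp add: mult_left_mono)
      finally show ?thesis .
    qed
  qed auto
  also have "\<dots> = K_L * (\<delta> * exp (2 * K_f * T)) * (T - t2)" using t2 by simp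
  also have "\<dots> \<le> K_L * (\<delta> * exp (2 * K_f * T)) * T"
    using t2' constants_nonneg(3) \<open>\<delta> \<ge> 0\<close> by (intro mult_left_mono) auto
  finally have tail: "norm (integral {t2..T} (\<lambda>r. l1 r - l2 r)) \<le> K_L * T * exp (2 * K_f * T) * \<delta>"
    by (simp add: mult_ac)
  have "norm (integral {t1..T} l1 - integral {t2..T} l2) \<le> M_L * (t2 - t1) + K_L * T * exp (2 * K_f * T) * \<delta>"
    unfolding split
    using head tail norm_triangle_ineq[of "integral {t1..t2} l1" "integral {t2..T} (\<lambda>r. l1 r - l2 r)"]
    by linarith
  then show ?thesis unfolding l1_def l2_def \<delta>_def .
qed

text \<open>Picard iteration in a Bielecki-weighted sup norm: a bounded continuous function w stands
  for the path r \<mapsto> exp(2 K_f (r - t)) w(r), and one Picard step is reweighted accordingly.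
  The weight makes the step a contraction with constant 1/2 on the whole interval.\<close>
definition weighted_path :: "real \<Rightarrow> (real \<Rightarrow>\<^sub>C 'n) \<Rightarrow> real \<Rightarrow> 'n" where
  "weighted_path t w r = exp (2 * K_f * (r - t)) *\<^sub>R w r"

definition picard_step :: "real \<Rightarrow> 'n \<Rightarrow> (real \<Rightarrow> 'm) \<Rightarrow> (real \<Rightarrow>\<^sub>C 'n) \<Rightarrow> real \<Rightarrow> 'n" where
  "picard_step t x0 u w s =
     exp (- (2 * K_f * (s - t))) *\<^sub>R (x0 + integral {t..s} (\<lambda>r. f (weighted_path t w r) (u r)))"

lemma picard_integrable:
  assumes "u \<in> controls T U" and "t \<in> {0..T}" and "a \<in> {t..T}"
  shows "(\<lambda>r. f (weighted_path t w r) (u r)) integrable_on {t..a}"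
proof (rule control_comp_integrable[OF f_cont f_bound assms(1)])
  show "continuous_on {t..a} (weighted_path t w)"
    unfolding weighted_path_def by (intro continuous_intros) auto
qed (use assms in auto)

lemma picard_step_contraction:
  assumes u: "u \<in> controls T U" and t: "t \<in> {0..T}" and a: "a \<in> {t..T}"
  shows "norm (picard_step t x0 u w a - picard_step t x0 u v a) \<le> 1/2 * dist w v"
proof -
  let ?gw = "\<lambda>r. f (weighted_path t w r) (u r)" and ?gv = "\<lambda>r. f (weighted_path t v r) (u r)"
  define E where "E = exp (2 * K_f * (a - t))"
  have "E \<ge> 1" unfolding E_def using a constants_nonneg(1) by simp
  have iw: "?gw integrable_on {t..a}" and iv: "?gv integrable_on {t..a}"
    using picard_integrable[OF u t a] by auto
  have "picard_step t x0 u w a - picard_step t x0 u v a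
          = exp (- (2 * K_f * (a - t))) *\<^sub>R integral {t..a} (\<lambda>r. ?gw r - ?gv r)"
    unfolding picard_step_def integral_diff[OF iw iv] by (simp add: algebra_simps)
  then have "norm (picard_step t x0 u w a - picard_step t x0 u v a)
               = (1 / E) * norm (integral {t..a} (\<lambda>r. ?gw r - ?gv r))"
    unfolding E_def by (simp add: exp_minus inverse_eq_divide)
  also have "norm (integral {t..a} (\<lambda>r. ?gw r - ?gv r))
               \<le> integral {t..a} (\<lambda>r. K_f * exp (2 * K_f * (r - t)) * dist w v)"
  proof (rule integral_norm_bound_integral)
    show "(\<lambda>r. ?gw r - ?gv r) integrable_on {t..a}" using iw iv by (rule integrable_diff)
    show "(\<lambda>r. K_f * exp (2 * K_f * (r - t)) * dist w v) integrable_on {t..a}"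
      by (intro integrable_continuous_interval continuous_intros)
    show "norm (?gw r - ?gv r) \<le> K_f * exp (2 * K_f * (r - t)) * dist w v" if r: "r \<in> {t..a}" for r
    proof -
      have "norm (?gw r - ?gv r) \<le> K_f * norm (weighted_path t w r - weighted_path t v r)"
        by (rule f_lipschitz[OF control_in_U[OF u]]) (use r a t in auto)
      also have "norm (weighted_path t w r - weighted_path t v r) = exp (2 * K_f * (r - t)) * dist (w r) (v r)"
        unfolding weighted_path_def by (simp add: dist_norm flip: scaleR_diff_right)
      also have "\<dots> \<le> exp (2 * K_f * (r - t)) * dist w v"
        using dist_bounded[of w r v] by simp
      finally show ?thesis using constants_nonneg(1) by (simp add: mult.assoc mult_left_mono)
    qed
  qed
  also have "integral {t..a} (\<lambda>r. K_f * exp (2 * K_f * (r - t)) * dist w v) = (E - 1) / 2 * dist w v"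
    using has_integral_mult_left[OF exp_weight_has_integral[of t a K_f], of "dist w v"] a
    unfolding E_def by (auto dest!: integral_unique)
  finally have "norm (picard_step t x0 u w a - picard_step t x0 u v a) \<le> (1 - 1 / E) / 2 * dist w v"
    using \<open>E \<ge> 1\<close> by (simp add: field_simps)
  also have "\<dots> \<le> 1/2 * dist w v"
    using \<open>E \<ge> 1\<close> by (intro mult_right_mono) auto
  finally show ?thesis .
qed

text \<open>Every admissible control generates a trajectory from every initial point: the fixed
  point of the (clamped) Picard step given by Banach's theorem.\<close>
lemma traj_exists:
  assumes u: "u \<in> controls T U" and t: "t \<in> {0..T}"
  obtains y where "is_traj f T t x0 u y"
proof -
  have clamp_in: "clamp t T s \<in> {t..T}" for s
    using clamp_in_interval[of t T s] t by simp
  have "continuous_on (cbox t T) (picard_step t x0 u w)" for w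
    unfolding picard_step_def cbox_interval
    by (intro continuous_intros indefinite_integral_continuous_1 picard_integrable[OF u t])
      (use t in auto)
  then have "\<exists>g. \<forall>s. apply_bcontfun g s = picard_step t x0 u w (clamp t T s)" for w
    using continuous_on_cbox_bcontfunE by metis
  then obtain \<Psi> where \<Psi>: "\<And>w s. apply_bcontfun (\<Psi> w) s = picard_step t x0 u w (clamp t T s)"
    by metis
  have "dist (\<Psi> w) (\<Psi> v) \<le> 1/2 * dist w v" for w v
  proof (rule dist_bound)
    fix s
    show "dist (\<Psi> w s) (\<Psi> v s) \<le> 1/2 * dist w v"
      unfolding \<Psi> dist_norm[of "picard_step t x0 u w (clamp t T s)"]
      by (rule picard_step_contraction[OF u t clamp_in])
  qed
  then obtain w where w_fixed: "\<Psi> w = w" using banach_fix_type[of "1/2" \<Psi>] by auto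
  have path: "weighted_path t w s = x0 + integral {t..s} (\<lambda>r. f (weighted_path t w r) (u r))"
    if s: "s \<in> {t..T}" for s
  proof -
    have "apply_bcontfun w s = picard_step t x0 u w s"
      using \<Psi>[of w s] w_fixed s by (simp add: cbox_interval)
    then show ?thesis unfolding weighted_path_def picard_step_def
      by (simp add: mult.assoc[symmetric] exp_add[symmetric])
  qed
  have "is_traj f T t x0 u (weighted_path t w)"
    unfolding is_traj_def
  proof
    fix s assume s: "s \<in> {t..T}"
    show "((\<lambda>r. f (weighted_path t w r) (u r)) has_integral (weighted_path t w s - x0)) {t..s}"
      using integrable_integral[OF picard_integrable[OF u t s]] path[OF s] by simp
  qed
  then show ?thesis by (rule that)
qed

lemma outcome_bounded:
  assumes t: "t \<in> {0..T}"
  shows "outcome_set f L U T t x0 \<subseteq> cball 0 (M_L * T)"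
proof
  fix J assume "J \<in> outcome_set f L U T t x0"
  then obtain u y where u: "u \<in> controls T U" and tr: "is_traj f T t x0 u y"
    and J: "J = integral {t..T} (\<lambda>s. L (y s) (u s))"
    unfolding outcome_set_def by blast
  have "(\<lambda>s. L (y s) (u s)) integrable_on {t..T}"
    by (rule control_comp_integrable[OF L_cont L_bound u _ traj_continuous[OF tr t]]) (use t in auto)
  then have "norm J \<le> integral {t..T} (\<lambda>_. M_L)"
    unfolding J by (rule integral_norm_bound_integral) (use t control_in_U[OF u] L_bound in auto)
  also have "\<dots> = M_L * (T - t)" using t by (simp add: mult.commute)
  also have "\<dots> \<le> M_L * T" using t constants_nonneg(4) by (simp add: mult_left_mono)
  finally show "J \<in> cball 0 (M_L * T)" by simp
qed

definition outcome_lipschitz :: real where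
  "outcome_lipschitz = M_L + K_L * T * exp (2 * K_f * T) * (M_f + 1)"

text \<open>Excess estimate: each outcome from (t', x') is approximated by an outcome from (t, x),
  obtained by running the same control from (t, x), up to outcome_lipschitz times the distance
  of the initial data.\<close>
lemma outcome_excess:
  assumes t: "t \<in> {0..T}" and t': "t' \<in> {0..T}" and J': "J' \<in> outcome_set f L U T t' x'"
  shows "\<exists>J\<in>outcome_set f L U T t x. dist J J' \<le> outcome_lipschitz * dist (t, x) (t', x')"
proof -
  obtain u y' where u: "u \<in> controls T U" and tr': "is_traj f T t' x' u y'"
    and J'_def: "J' = integral {t'..T} (\<lambda>s. L (y' s) (u s))"
    using J' unfolding outcome_set_def by blast
  obtain y where tr: "is_traj f T t x u y" using traj_exists[OF u t] by blast
  define J where "J = integral {t..T} (\<lambda>s. L (y s) (u s))"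
  have "J \<in> outcome_set f L U T t x" unfolding outcome_set_def J_def using u tr by blast
  define c where "c = K_L * T * exp (2 * K_f * T)"
  have "c \<ge> 0" unfolding c_def using constants_nonneg t by simp
  have bound: "norm (J - J') \<le> M_L * \<bar>t - t'\<bar> + c * (M_f * \<bar>t - t'\<bar> + norm (x - x'))"
  proof (cases "t \<le> t'")
    case True
    then show ?thesis using cost_compare[OF u t _ tr tr'] t' unfolding J_def J'_def c_def by auto
  next
    case False
    then have "norm (J' - J) \<le> M_L * (t - t') + c * (M_f * (t - t') + norm (x' - x))"
      using cost_compare[OF u t' _ tr' tr] t unfolding J_def J'_def c_def by auto
    then show ?thesis using False by (simp add: norm_minus_commute)
  qed
  define d where "d = dist (t, x) (t', x')"
  have a: "\<bar>t - t'\<bar> \<le> d" using dist_fst_le[of "(t, x)" "(t', x')"] unfolding d_def by (simp add: dist_real_def)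
  have b: "norm (x - x') \<le> d" using dist_snd_le[of "(t, x)" "(t', x')"] unfolding d_def by (simp add: dist_norm)
  have "M_L * \<bar>t - t'\<bar> \<le> M_L * d" using a constants_nonneg(4) by (rule mult_left_mono)
  moreover have "c * (M_f * \<bar>t - t'\<bar> + norm (x - x')) \<le> c * (M_f * d + d)"
    using a b constants_nonneg(2) \<open>c \<ge> 0\<close> by (intro mult_left_mono add_mono) auto
  ultimately have "norm (J - J') \<le> outcome_lipschitz * d"
    using bound unfolding outcome_lipschitz_def c_def by (simp add: algebra_simps)
  then show ?thesis using \<open>J \<in> outcome_set f L U T t x\<close> unfolding d_def by (auto simp: dist_norm)
qed


lemma closed_outcome_bounded:
  "bounded (\<Union>w\<in>{0..T} \<times> UNIV. closure (outcome_set f L U T (fst w) (snd w)))"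
proof (rule bounded_subset[OF bounded_cball])
  show "(\<Union>w\<in>{0..T} \<times> UNIV. closure (outcome_set f L U T (fst w) (snd w))) \<subseteq> cball 0 (M_L * T)"
    by (intro UN_least closure_minimal outcome_bounded closed_cball) auto
qed

lemma closed_outcome_osc:
  assumes "t \<in> {0..T}"
  shows "outer_semicontinuous_at (\<lambda>w. closure (outcome_set f L U T (fst w) (snd w)))
           ({0..T} \<times> UNIV) (t, x)"
  using outcome_excess[OF assms]
  by (intro outer_semicontinuous_at_closure[where \<Lambda> = outcome_lipschitz]) auto

text \<open>Since the closed outcome sets are compact, V + P = cl Y + P.\<close>
lemma value_map_up_eq:
  assumes "closed P" "convex P" "cone P" "P \<inter> uminus ` P = {0}" and t: "t \<in> {0..T}"
  shows "value_map_up f L U P T t x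
           = {c + q | c q. c \<in> closure (outcome_set f L U T t x) \<and> q \<in> P}"
proof -
  have "compact (closure (outcome_set f L U T t x))"
    using outcome_bounded[OF t] bounded_cball bounded_subset compact_closure by blast
  then show ?thesis
    unfolding value_map_up_def value_map_def by (rule efficient_set_plus_cone[OF assms(1-4)])
qed

end


theorem proposition7p2:
  fixes T :: real and U :: "(real^'m) set" and P :: "(real^'p) set"
    and f :: "real^'n \<Rightarrow> real^'m \<Rightarrow> real^'n" and L :: "real^'n \<Rightarrow> real^'m \<Rightarrow> real^'p"
    and K_f M_f K_L M_L :: real
  assumes "T > 0"
    and "U \<noteq> {}" and "compact U"
    and "continuous_on (UNIV \<times> U) (\<lambda>(x, u). f x u)"
    and "\<And>x1 x2 u. u \<in> U \<Longrightarrow> norm (f x1 u - f x2 u) \<le> K_f * norm (x1 - x2)"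
    and "\<And>x u. u \<in> U \<Longrightarrow> norm (f x u) \<le> M_f"
    and "continuous_on (UNIV \<times> U) (\<lambda>(x, u). L x u)"
    and "\<And>x u. u \<in> U \<Longrightarrow> norm (L x u) \<le> M_L"
    and "\<And>x1 x2 u. u \<in> U \<Longrightarrow> norm (L x1 u - L x2 u) \<le> K_L * norm (x1 - x2)"
    and "closed P" and "convex P" and "cone P" and "0 \<in> P"
    and "P \<inter> uminus ` P = {0}" and "interior P \<noteq> {}"
    and "t \<in> {0..T}"
  shows "outer_semicontinuous_at (\<lambda>(t, x). value_map_up f L U P T t x) ({0..T} \<times> UNIV) (t, x)"
proof -
  interpret control_system T U f L K_f M_f K_L M_L
    by unfold_locales (use assms in auto)
  let ?C = "\<lambda>w. closure (outcome_set f L U T (fst w) (snd w))"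
  have "outer_semicontinuous_at (\<lambda>w. {c + q | c q. c \<in> ?C w \<and> q \<in> P}) ({0..T} \<times> UNIV) (t, x)"
    using closed_outcome_osc[OF \<open>t \<in> {0..T}\<close>] closed_outcome_bounded \<open>closed P\<close>
    by (rule outer_semicontinuous_at_plus_closed)
  moreover have "(\<lambda>(t, x). value_map_up f L U P T t x) w = {c + q | c q. c \<in> ?C w \<and> q \<in> P}"
    if "w \<in> {0..T} \<times> UNIV" for w
    using that
    by (cases w) (simp add: value_map_up_eq[OF \<open>closed P\<close> \<open>convex P\<close> \<open>cone P\<close> \<open>P \<inter> uminus ` P = {0}\<close>])
  ultimately show ?thesis
    using outer_semicontinuous_at_cong[where F = "\<lambda>(t, x). value_map_up f L U P T t x"]
      \<open>t \<in> {0..T}\<close> by simp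
qed

end
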